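(* Let $X\in\mathbb{R}^{n\times p}$ be deterministic, $\beta^*\in\mathbb{R}^p$, $\sigma^*>0$, and $y=X\beta^*+\varepsilon$ with $\varepsilon\in\mathbb{R}^n$ having i.i.d. $\mathcal N(0,{\sigma^*}^2)$ entries. Let $\mathcal S^*=\{j:\beta^*_j\ne0\}$. Assume $\Psi=\frac1nX^\top X$ satisfies $\Psi_{jj}=1$ and $\max_{j'\ne j}|\Psi_{jj'}|\le\frac{1}{7\alpha s}$ for all $j\in[p]$, for some integer $s\ge1$ with $|\mathcal S^*|\le s$ and some $\alpha>1$. Let $A>0$, $\lambda=A\sqrt{2\log p/n}$, let $\eta>0$ satisfy $\lambda\|\beta^*\|_1\le\eta\sigma^*$, and let $C=2\big(1+\frac{16}{7(\alpha-1)}\big)$. Let $\hat\beta$ be a minimizer over $\beta\in\mathbb{R}^p$ of $\frac{1}{\sqrt n}\|y-X\beta\|_2+\lambda\|\beta\|_1$ (the square-root Lasso). Then with probability at least $1-p^{1-A^2/8}-(1+e^2)e^{-n/24}$ the following holds: $\|\hat\beta-\beta^*\|_\infty\le C(2+\eta)\lambda\sigma^*$, and moreover, if $\min_{j\in\mathcal S^*}|\beta^*_j|>2C(2+\eta)\lambda\sigma^*$, then $\hat{\mathcal S}=\{j\in[p]:|\hat\beta_j|>C(2+\eta)\lambda\sigma^*\}$ equals $\mathcal S^*$. *)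

theory Defs
  imports "HOL-Probability.Probability"
begin

text \<open>Vectors in R^n / R^p are functions on nat, only indices below n resp. p matter.
  A design matrix X in R^(n x p) is a function nat => nat => real (row i, column j).\<close>

definition gram :: "nat \<Rightarrow> (nat \<Rightarrow> nat \<Rightarrow> real) \<Rightarrow> nat \<Rightarrow> nat \<Rightarrow> real" where
  "gram n X j k = (1 / real n) * (\<Sum>i<n. X i j * X i k)"

definition support :: "nat \<Rightarrow> (nat \<Rightarrow> real) \<Rightarrow> nat set" where
  "support p b = {j. j < p \<and> b j \<noteq> 0}"

definition l1norm :: "nat \<Rightarrow> (nat \<Rightarrow> real) \<Rightarrow> real" where
  "l1norm p b = (\<Sum>j<p. \<bar>b j\<bar>)"

definition linfnorm :: "nat \<Rightarrow> (nat \<Rightarrow> real) \<Rightarrow> real" where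
  "linfnorm p b = Max (insert 0 ((\<lambda>j. \<bar>b j\<bar>) ` {..<p}))"

definition response :: "nat \<Rightarrow> nat \<Rightarrow> (nat \<Rightarrow> nat \<Rightarrow> real) \<Rightarrow> (nat \<Rightarrow> real) \<Rightarrow> (nat \<Rightarrow> real) \<Rightarrow> nat \<Rightarrow> real" where
  "response n p X b eps i = (\<Sum>j<p. X i j * b j) + eps i"

definition sqrt_lasso_obj :: "nat \<Rightarrow> nat \<Rightarrow> (nat \<Rightarrow> nat \<Rightarrow> real) \<Rightarrow> (nat \<Rightarrow> real) \<Rightarrow> real \<Rightarrow> (nat \<Rightarrow> real) \<Rightarrow> real" where
  "sqrt_lasso_obj n p X y lam b =
     (1 / sqrt (real n)) * sqrt (\<Sum>i<n. (y i - (\<Sum>j<p. X i j * b j))\<^sup>2) + lam * l1norm p b"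

definition is_sqrt_lasso_min :: "nat \<Rightarrow> nat \<Rightarrow> (nat \<Rightarrow> nat \<Rightarrow> real) \<Rightarrow> (nat \<Rightarrow> real) \<Rightarrow> real \<Rightarrow> (nat \<Rightarrow> real) \<Rightarrow> bool" where
  "is_sqrt_lasso_min n p X y lam bh \<longleftrightarrow>
     (\<forall>b. sqrt_lasso_obj n p X y lam bh \<le> sqrt_lasso_obj n p X y lam b)"

text \<open>Noise distribution: n i.i.d. N(0, sigma^2) coordinates (sigma = standard deviation).\<close>
definition noise_measure :: "nat \<Rightarrow> real \<Rightarrow> (nat \<Rightarrow> real) measure" where
  "noise_measure n \<sigma> = PiM {..<n} (\<lambda>_. density lborel (normal_density 0 \<sigma>))"

end

theory Submission
  imports Defs
begin

text \<open>
  On the event that every column correlation |X_j' eps| is at most lam n sigma / 2 and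
  ||eps||^2 lies between 0.49 n sigma^2 and 5 n sigma^2, the argument is deterministic.
  Comparing the objective at the minimiser with its value at beta* and applying Cauchy-Schwarz
  confines the error D = beta_hat - beta* to the cone ||D||_1 <= 7 ||D_S||_1, where S is the
  support of beta*. Coordinatewise optimality of the minimiser bounds every entry of Psi D by
  (7/2 + eta) lam sigma, and mutual incoherence of Psi turns the cone condition and this bound
  into the entrywise bound on D; support recovery follows by thresholding. The event has the
  stated probability by Gaussian Chernoff bounds: a union bound over the 2p linear tails, and
  chi-square tails on both sides of ||eps||^2.
\<close>

section \<open>Deterministic analysis of the square-root Lasso\<close>

text \<open>The right derivative at \<open>\<tau> = 0\<close> of the right-hand side of \<open>min\<close> is \<open>L - g / R\<close>, and
  minimality at \<open>\<tau> = 0\<close> forces it to be nonnegative.\<close>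

lemma sqrt_quadratic_min_slope_le:
  fixes R g L c :: real
  assumes R: "R \<ge> 0" and L: "L > 0" and c: "c > 0" and R0: "R = 0 \<Longrightarrow> g = 0"
    and min: "\<And>\<tau>. R \<le> sqrt (R\<^sup>2 - 2 * \<tau> * g + \<tau>\<^sup>2 * c) + L * \<bar>\<tau>\<bar>"
  shows "g \<le> L * R"
proof (rule ccontr)
  assume "\<not> g \<le> L * R"
  then have gap: "g - L * R > 0" by simp
  then have R_pos: "R > 0" using R R0 by (cases "R = 0") auto
  define \<tau> where "\<tau> = min (R / L) ((g - L * R) / c)"
  have \<tau>: "\<tau> > 0" using R_pos L c gap by (simp add: \<tau>_def)
  define Q where "Q = R\<^sup>2 - 2 * \<tau> * g + \<tau>\<^sup>2 * c"
  have nonneg: "0 \<le> R - L * \<tau>" using L unfolding \<tau>_def by (simp add: min_def field_simps)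
  have le_sqrt: "R - L * \<tau> \<le> sqrt Q" using min[of \<tau>] \<tau> by (simp add: Q_def)
  have "0 \<le> sqrt Q" using nonneg le_sqrt by linarith
  then have "sqrt Q ^ 2 = Q" by simp
  moreover have "(R - L * \<tau>)\<^sup>2 \<le> sqrt Q ^ 2" by (rule power_mono[OF le_sqrt nonneg])
  ultimately have "(R - L * \<tau>)\<^sup>2 \<le> R\<^sup>2 - 2 * \<tau> * g + \<tau>\<^sup>2 * c" by (simp add: Q_def)
  then have "2 * \<tau> * (g - L * R) \<le> \<tau>\<^sup>2 * (c - L\<^sup>2)"
    by (simp add: power2_eq_square algebra_simps)
  also have "\<dots> \<le> \<tau> * (\<tau> * c)" using L by (simp add: power2_eq_square algebra_simps)
  finally have "2 * (g - L * R) \<le> \<tau> * c" using \<tau> by simp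
  moreover have "\<tau> * c \<le> g - L * R" using c unfolding \<tau>_def by (simp add: min_def field_simps)
  ultimately show False using gap by simp
qed

lemma response_residual:
  "response n p X \<beta>s eps i - (\<Sum>j<p. X i j * b j) = eps i - (\<Sum>j<p. X i j * (b j - \<beta>s j))"
  by (simp add: response_def sum_subtractf algebra_simps)

lemma sqrt_lasso_obj_response:
  "sqrt_lasso_obj n p X (response n p X \<beta>s eps) lam b
     = L2_set (\<lambda>i. eps i - (\<Sum>j<p. X i j * (b j - \<beta>s j))) {..<n} / sqrt (real n) + lam * l1norm p b"
  by (simp add: sqrt_lasso_obj_def L2_set_def response_residual)

lemma sqrt_lasso_basic_ineq:
  assumes "is_sqrt_lasso_min n p X (response n p X \<beta>s eps) lam \<beta>h"
  shows "L2_set (\<lambda>i. eps i - (\<Sum>j<p. X i j * (\<beta>h j - \<beta>s j))) {..<n} / sqrt (real n) + lam * l1norm p \<beta>h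
         \<le> L2_set eps {..<n} / sqrt (real n) + lam * l1norm p \<beta>s"
proof -
  have "sqrt_lasso_obj n p X (response n p X \<beta>s eps) lam \<beta>h
      \<le> sqrt_lasso_obj n p X (response n p X \<beta>s eps) lam \<beta>s"
    using assms unfolding is_sqrt_lasso_min_def by blast
  then show ?thesis by (simp add: sqrt_lasso_obj_response)
qed

lemma sqrt_lasso_kkt:
  assumes min: "is_sqrt_lasso_min n p X y lam bh" and lam: "lam > 0" and j: "j < p"
    and col: "0 < (\<Sum>i<n. (X i j)\<^sup>2)"
  defines "r \<equiv> \<lambda>i. y i - (\<Sum>k<p. X i k * bh k)"
  shows "\<bar>\<Sum>i<n. X i j * r i\<bar> \<le> sqrt (real n) * lam * L2_set r {..<n}"
proof -
  define g where "g = (\<Sum>i<n. X i j * r i)"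
  define c where "c = (\<Sum>i<n. (X i j)\<^sup>2)"
  define R where "R = L2_set r {..<n}"
  have n: "n > 0" using col by (cases n) auto
  have perturb: "R \<le> sqrt (R\<^sup>2 - 2 * \<tau> * g + \<tau>\<^sup>2 * c) + sqrt (real n) * lam * \<bar>\<tau>\<bar>" for \<tau>
  proof -
    define b where "b k = bh k + (if k = j then \<tau> else 0)" for k
    have "(\<Sum>k<p. X i k * b k) = (\<Sum>k<p. X i k * bh k) + \<tau> * X i j" for i
      using j by (simp add: b_def distrib_left sum.distrib if_distrib[of "(*) (X i _)"] cong: if_cong)
    then have "(\<Sum>i<n. (y i - (\<Sum>k<p. X i k * b k))\<^sup>2) = (\<Sum>i<n. (r i - \<tau> * X i j)\<^sup>2)"
      by (simp add: r_def algebra_simps)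
    also have "\<dots> = R\<^sup>2 - 2 * \<tau> * g + \<tau>\<^sup>2 * c"
      by (simp add: R_def L2_set_def g_def c_def power2_diff sum.distrib sum_subtractf
          sum_distrib_left power_mult_distrib sum_nonneg algebra_simps)
    finally have obj_b: "sqrt_lasso_obj n p X y lam b
        = sqrt (R\<^sup>2 - 2 * \<tau> * g + \<tau>\<^sup>2 * c) / sqrt (real n) + lam * l1norm p b"
      by (simp add: sqrt_lasso_obj_def)
    have "l1norm p b \<le> (\<Sum>k<p. \<bar>bh k\<bar> + (if k = j then \<bar>\<tau>\<bar> else 0))"
      unfolding l1norm_def b_def by (intro sum_mono) (auto intro: abs_triangle_ineq)
    also have "\<dots> = l1norm p bh + \<bar>\<tau>\<bar>" using j by (simp add: sum.distrib l1norm_def)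
    finally have "lam * l1norm p b \<le> lam * l1norm p bh + lam * \<bar>\<tau>\<bar>"
      using lam by (simp add: mult_left_mono flip: distrib_left)
    moreover have "R / sqrt (real n) + lam * l1norm p bh \<le> sqrt_lasso_obj n p X y lam b"
      using min unfolding is_sqrt_lasso_min_def by (simp add: sqrt_lasso_obj_def R_def L2_set_def r_def)
    ultimately have "R / sqrt (real n) \<le> sqrt (R\<^sup>2 - 2 * \<tau> * g + \<tau>\<^sup>2 * c) / sqrt (real n) + lam * \<bar>\<tau>\<bar>"
      unfolding obj_b by linarith
    then show ?thesis using n by (simp add: field_simps)
  qed
  have R0: "g = 0" if "R = 0"
    using that unfolding R_def g_def by (simp add: L2_set_eq_0_iff)
  have L: "sqrt (real n) * lam > 0" using n lam by simp
  have "g \<le> sqrt (real n) * lam * R"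
    by (rule sqrt_quadratic_min_slope_le[OF _ L col[folded c_def] R0 perturb]) (simp add: R_def)
  moreover have "- g \<le> sqrt (real n) * lam * R"
    by (rule sqrt_quadratic_min_slope_le[OF _ L col[folded c_def]])
      (use R0 perturb[of "- _"] in \<open>auto simp: R_def\<close>)
  ultimately show ?thesis unfolding g_def R_def by linarith
qed

lemma sum_mult_design_le_l1norm:
  assumes score: "\<And>j. j < p \<Longrightarrow> \<bar>\<Sum>i<n. X i j * e i\<bar> \<le> K"
  shows "(\<Sum>i<n. e i * (\<Sum>j<p. X i j * D j)) \<le> K * l1norm p D"
proof -
  have "(\<Sum>i<n. e i * (\<Sum>j<p. X i j * D j)) = (\<Sum>j<p. D j * (\<Sum>i<n. X i j * e i))"
    by (simp add: sum_distrib_left sum.swap[of _ "{..<n}"] mult_ac)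
  also have "\<dots> \<le> (\<Sum>j<p. \<bar>D j\<bar> * K)"
  proof (intro sum_mono)
    fix j assume "j \<in> {..<p}"
    then have "\<bar>D j\<bar> * \<bar>\<Sum>i<n. X i j * e i\<bar> \<le> \<bar>D j\<bar> * K" using score by (simp add: mult_left_mono)
    then show "D j * (\<Sum>i<n. X i j * e i) \<le> \<bar>D j\<bar> * K" by (metis abs_ge_self abs_mult order_trans)
  qed
  finally show ?thesis by (simp add: l1norm_def sum_distrib_left mult.commute)
qed

lemma sqrt_lasso_l1_excess:
  assumes min: "is_sqrt_lasso_min n p X (response n p X \<beta>s eps) lam \<beta>h"
    and n: "n > 0" and \<sigma>: "\<sigma> > 0" and lam: "lam > 0"
    and score: "\<And>j. j < p \<Longrightarrow> \<bar>\<Sum>i<n. X i j * eps i\<bar> \<le> lam * real n * \<sigma> / 2"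
    and lower: "49 / 100 * real n * \<sigma>\<^sup>2 \<le> (\<Sum>i<n. (eps i)\<^sup>2)"
  shows "l1norm p \<beta>h - l1norm p \<beta>s \<le> 5 / 7 * l1norm p (\<lambda>j. \<beta>h j - \<beta>s j)"
proof -
  define D where "D j = \<beta>h j - \<beta>s j" for j
  define XD where "XD i = (\<Sum>j<p. X i j * D j)" for i
  define R where "R = L2_set (\<lambda>i. eps i - XD i) {..<n}"
  define N where "N = L2_set eps {..<n}"
  define \<Delta> where "\<Delta> = l1norm p \<beta>h - l1norm p \<beta>s"
  define sq where "sq = sqrt (real n)"
  have sq: "sq > 0" "sq * sq = real n" using n by (simp_all add: sq_def)
  have "R / sq + lam * l1norm p \<beta>h \<le> N / sq + lam * l1norm p \<beta>s"
    using sqrt_lasso_basic_ineq[OF min] by (simp add: R_def N_def XD_def D_def sq_def)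
  then have "sq * (R / sq + lam * l1norm p \<beta>h) \<le> sq * (N / sq + lam * l1norm p \<beta>s)"
    using sq(1) by (intro mult_left_mono) auto
  then have basic: "R \<le> N - sq * lam * \<Delta>"
    using sq(1) by (simp add: \<Delta>_def algebra_simps)
  have score_XD: "(\<Sum>i<n. eps i * XD i) \<le> lam * real n * \<sigma> / 2 * l1norm p D"
    unfolding XD_def by (rule sum_mult_design_le_l1norm[OF score])
  have "N\<^sup>2 - (\<Sum>i<n. eps i * XD i) = (\<Sum>i<n. eps i * (eps i - XD i))"
    by (simp add: N_def L2_set_def sum_nonneg sum_subtractf power2_eq_square algebra_simps)
  also have "\<dots> \<le> (\<Sum>i<n. \<bar>eps i\<bar> * \<bar>eps i - XD i\<bar>)"
    by (intro sum_mono) (metis abs_ge_self abs_mult)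
  also have "\<dots> \<le> N * R"
    unfolding N_def R_def by (rule L2_set_mult_ineq)
  also have "\<dots> \<le> N * (N - sq * lam * \<Delta>)" using basic by (simp add: N_def mult_left_mono)
  finally have key: "N * sq * lam * \<Delta> \<le> lam * real n * \<sigma> / 2 * l1norm p D"
    using score_XD by (simp add: power2_eq_square algebra_simps)
  have N_lower: "7 / 10 * sq * \<sigma> \<le> N"
  proof -
    have "(7 / 10 * sq * \<sigma>)\<^sup>2 = 49 / 100 * real n * \<sigma>\<^sup>2"
      by (simp add: sq_def power_mult_distrib power_divide)
    also have "\<dots> \<le> N\<^sup>2" using lower by (simp add: N_def L2_set_def sum_nonneg)
    finally show ?thesis by (rule power2_le_imp_le) (simp add: N_def)
  qed
  have "0 \<le> l1norm p D" by (simp add: l1norm_def sum_nonneg)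
  show ?thesis
  proof (cases "\<Delta> \<le> 0")
    case True
    then show ?thesis using \<open>0 \<le> l1norm p D\<close> unfolding \<Delta>_def D_def by linarith
  next
    case False
    have "(lam * real n * \<sigma>) * (7 / 10 * \<Delta>) = 7 / 10 * sq * \<sigma> * (sq * lam * \<Delta>)"
      unfolding sq(2)[symmetric] by (simp only: mult_ac)
    also have "\<dots> \<le> N * (sq * lam * \<Delta>)"
      using N_lower sq lam False by (intro mult_right_mono) auto
    also have "\<dots> \<le> (lam * real n * \<sigma>) * (l1norm p D / 2)"
      using key by (simp add: mult_ac)
    finally have "7 / 10 * \<Delta> \<le> l1norm p D / 2"
      by (rule mult_left_le_imp_le) (use lam n \<sigma> in simp)
    then show ?thesis unfolding \<Delta>_def D_def by (simp add: field_simps)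
  qed
qed

lemma l1norm_cone_of_excess:
  assumes excess: "l1norm p b - l1norm p \<beta>s \<le> \<kappa> * l1norm p (\<lambda>j. b j - \<beta>s j)"
  shows "(1 - \<kappa>) * l1norm p (\<lambda>j. b j - \<beta>s j) \<le> 2 * (\<Sum>j\<in>support p \<beta>s. \<bar>b j - \<beta>s j\<bar>)"
proof -
  define S where "S = support p \<beta>s"
  define S' where "S' = {..<p} - S"
  have S: "S \<subseteq> {..<p}" by (auto simp: S_def support_def)
  have split: "(\<Sum>j<p. f j) = (\<Sum>j\<in>S. f j) + (\<Sum>j\<in>S'. f j)" for f :: "nat \<Rightarrow> real"
    unfolding S'_def using sum.subset_diff[OF S, of f] by (simp add: add.commute)
  have off_support: "\<beta>s j = 0" if "j \<in> S'" for j using that by (auto simp: S'_def S_def support_def)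
  define DS where "DS = (\<Sum>j\<in>S. \<bar>b j - \<beta>s j\<bar>)"
  define DS' where "DS' = (\<Sum>j\<in>S'. \<bar>b j - \<beta>s j\<bar>)"
  have "l1norm p \<beta>s - DS = (\<Sum>j\<in>S. \<bar>\<beta>s j\<bar> - \<bar>b j - \<beta>s j\<bar>)"
    unfolding DS_def l1norm_def split by (simp add: off_support sum_subtractf)
  also have "\<dots> \<le> (\<Sum>j\<in>S. \<bar>b j\<bar>)" by (intro sum_mono) arith
  finally have "l1norm p \<beta>s - DS \<le> (\<Sum>j\<in>S. \<bar>b j\<bar>)" .
  moreover have "(\<Sum>j\<in>S'. \<bar>b j\<bar>) = DS'" unfolding DS'_def by (intro sum.cong) (auto simp: off_support)
  moreover have "l1norm p b = (\<Sum>j\<in>S. \<bar>b j\<bar>) + (\<Sum>j\<in>S'. \<bar>b j\<bar>)" unfolding l1norm_def by (rule split)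
  moreover have D: "l1norm p (\<lambda>j. b j - \<beta>s j) = DS + DS'" unfolding l1norm_def DS_def DS'_def by (rule split)
  moreover have "l1norm p b - l1norm p \<beta>s \<le> \<kappa> * (DS + DS')" using excess D by simp
  moreover have "(1 - \<kappa>) * (DS + DS') = DS + DS' - \<kappa> * (DS + DS')" by (simp add: left_diff_distrib)
  ultimately have "(1 - \<kappa>) * (DS + DS') \<le> 2 * DS" by linarith
  then show ?thesis unfolding D DS_def S_def .
qed

lemma sum_sq_column_of_gram_diag:
  "gram n X j j = 1 \<Longrightarrow> (\<Sum>i<n. (X i j)\<^sup>2) = real n"
  by (cases "n = 0") (auto simp: gram_def power2_eq_square field_simps)

lemma sqrt_lasso_gram_error_bound:
  assumes min: "is_sqrt_lasso_min n p X (response n p X \<beta>s eps) lam \<beta>h"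
    and \<sigma>: "\<sigma> > 0" and lam: "lam > 0" and j: "j < p" and diag: "gram n X j j = 1"
    and score: "\<bar>\<Sum>i<n. X i j * eps i\<bar> \<le> lam * real n * \<sigma> / 2"
    and upper: "(\<Sum>i<n. (eps i)\<^sup>2) \<le> 9 * real n * \<sigma>\<^sup>2"
    and signal: "lam * l1norm p \<beta>s \<le> \<eta> * \<sigma>"
  shows "\<bar>\<Sum>k<p. gram n X j k * (\<beta>h k - \<beta>s k)\<bar> \<le> (7 / 2 + \<eta>) * lam * \<sigma>"
proof -
  define XD where "XD i = (\<Sum>k<p. X i k * (\<beta>h k - \<beta>s k))" for i
  define r where "r i = eps i - XD i" for i
  define R where "R = L2_set r {..<n}"
  define sq where "sq = sqrt (real n)"
  have col: "(\<Sum>i<n. (X i j)\<^sup>2) = real n" by (rule sum_sq_column_of_gram_diag[OF diag])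
  then have n: "n > 0" using diag by (cases n) (auto simp: gram_def)
  have sq: "sq > 0" "sq * sq = real n" using n by (simp_all add: sq_def)
  have kkt: "\<bar>\<Sum>i<n. X i j * r i\<bar> \<le> sq * lam * R"
    using sqrt_lasso_kkt[OF min lam j] col n unfolding R_def r_def XD_def sq_def
    by (simp add: response_residual)
  have "R / sq \<le> L2_set eps {..<n} / sq + lam * l1norm p \<beta>s - lam * l1norm p \<beta>h"
    using sqrt_lasso_basic_ineq[OF min] unfolding R_def r_def XD_def sq_def by simp
  also have "\<dots> \<le> 3 * \<sigma> + \<eta> * \<sigma>"
  proof -
    have "L2_set eps {..<n} \<le> sqrt (9 * real n * \<sigma>\<^sup>2)"
      unfolding L2_set_def using upper by simp
    also have "\<dots> = 3 * sq * \<sigma>" using \<sigma> by (simp add: sq_def real_sqrt_mult)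
    finally have "L2_set eps {..<n} / sq \<le> 3 * \<sigma>" using sq by (simp add: field_simps)
    moreover have "0 \<le> lam * l1norm p \<beta>h" using lam by (simp add: l1norm_def sum_nonneg)
    ultimately show ?thesis using signal by linarith
  qed
  finally have R_bound: "R / sq \<le> (3 + \<eta>) * \<sigma>" by (simp add: algebra_simps)
  have "(\<Sum>k<p. gram n X j k * (\<beta>h k - \<beta>s k)) = (\<Sum>i<n. X i j * XD i) / real n"
    unfolding gram_def XD_def
    by (simp add: sum_distrib_left sum_distrib_right sum_divide_distrib sum.swap[of _ "{..<p}"] mult_ac)
  also have "\<dots> = ((\<Sum>i<n. X i j * eps i) - (\<Sum>i<n. X i j * r i)) / real n"
    by (simp add: r_def algebra_simps sum_subtractf)
  also have "\<bar>\<dots>\<bar> \<le> (lam * real n * \<sigma> / 2 + sq * lam * R) / real n"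
    using score kkt n by (simp add: divide_right_mono abs_triangle_ineq4[THEN order_trans])
  also have "\<dots> = lam * \<sigma> / 2 + lam * (R / sq)"
    using n sq by (simp add: field_simps flip: sq(2))
  also have "\<dots> \<le> (7 / 2 + \<eta>) * lam * \<sigma>"
    using mult_left_mono[OF R_bound, of lam] lam by (simp add: algebra_simps)
  finally show ?thesis .
qed

lemma abs_le_row_sum_incoherent:
  fixes G :: "nat \<Rightarrow> nat \<Rightarrow> real"
  assumes j: "j < p" and diag: "G j j = 1" and c: "0 \<le> c"
    and offdiag: "\<And>k. k < p \<Longrightarrow> k \<noteq> j \<Longrightarrow> \<bar>G j k\<bar> \<le> c"
  shows "\<bar>D j\<bar> \<le> \<bar>\<Sum>k<p. G j k * D k\<bar> + c * l1norm p D"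
proof -
  have "(\<Sum>k<p. G j k * D k) = D j + (\<Sum>k\<in>{..<p} - {j}. G j k * D k)"
    using j diag by (simp add: sum.remove)
  moreover have "\<bar>\<Sum>k\<in>{..<p} - {j}. G j k * D k\<bar> \<le> (\<Sum>k\<in>{..<p} - {j}. c * \<bar>D k\<bar>)"
    by (rule order_trans[OF sum_abs sum_mono]) (auto simp: abs_mult intro: mult_right_mono offdiag)
  moreover have "(\<Sum>k\<in>{..<p} - {j}. c * \<bar>D k\<bar>) \<le> c * l1norm p D"
    unfolding l1norm_def sum_distrib_left by (rule sum_mono2) (use c in auto)
  ultimately show ?thesis by linarith
qed

lemma abs_le_of_cone_incoherent:
  fixes D :: "nat \<Rightarrow> real" and S :: "nat set" and s :: nat
  assumes S: "S \<subseteq> {..<p}" "card S \<le> s" and s: "s \<ge> 1"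
    and \<kappa>: "\<kappa> > 0" and \<alpha>: "\<alpha> > 1" and M: "M \<ge> 0"
    and cone: "l1norm p D \<le> \<kappa> * (\<Sum>k\<in>S. \<bar>D k\<bar>)"
    and rows: "\<And>k. k < p \<Longrightarrow> \<bar>D k\<bar> \<le> M + l1norm p D / (\<kappa> * \<alpha> * real s)"
    and j: "j < p"
  shows "\<bar>D j\<bar> \<le> \<alpha> / (\<alpha> - 1) * M"
proof -
  define DS where "DS = (\<Sum>k\<in>S. \<bar>D k\<bar>)"
  have "l1norm p D / (\<kappa> * \<alpha> * real s) \<le> \<kappa> * DS / (\<kappa> * \<alpha> * real s)"
    using cone \<kappa> \<alpha> s by (intro divide_right_mono) (auto simp: DS_def)
  then have cone': "l1norm p D / (\<kappa> * \<alpha> * real s) \<le> DS / (\<alpha> * real s)"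
    using \<kappa> by simp
  have "DS \<le> (\<Sum>k\<in>S. M + l1norm p D / (\<kappa> * \<alpha> * real s))"
    unfolding DS_def using S rows by (intro sum_mono) auto
  also have "\<dots> \<le> real s * (M + l1norm p D / (\<kappa> * \<alpha> * real s))"
    using S M \<kappa> \<alpha> by (simp add: mult_right_mono l1norm_def sum_nonneg)
  also have "\<dots> \<le> real s * M + DS / \<alpha>"
    using mult_left_mono[OF cone', of "real s"] s by (simp add: distrib_left)
  finally have "DS * (\<alpha> - 1) \<le> real s * M * \<alpha>"
    using \<alpha> by (simp add: field_simps)
  then have "DS / (\<alpha> * real s) \<le> M / (\<alpha> - 1)"
    using \<alpha> s by (simp add: field_simps)
  then have "\<bar>D j\<bar> \<le> M + M / (\<alpha> - 1)" using rows[OF j] cone' by linarith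
  also have "\<dots> = \<alpha> / (\<alpha> - 1) * M" using \<alpha> by (simp add: field_simps)
  finally show ?thesis .
qed

lemma sqrt_lasso_constant_le:
  fixes \<alpha> \<eta> :: real
  assumes "\<alpha> > 1" and "\<eta> \<ge> 0"
  shows "\<alpha> / (\<alpha> - 1) * (7 / 2 + \<eta>) \<le> 2 * (1 + 16 / (7 * (\<alpha> - 1))) * (2 + \<eta>)"
proof -
  have "\<alpha> / (\<alpha> - 1) * (7 / 2 + \<eta>) = (7 / 2 + \<eta>) + (7 / 2 + \<eta>) / (\<alpha> - 1)"
    using assms by (simp add: field_simps)
  also have "\<dots> \<le> 2 * (2 + \<eta>) + 32 / 7 * (2 + \<eta>) / (\<alpha> - 1)"
    using assms by (intro add_mono divide_right_mono) auto
  also have "\<dots> = 2 * (1 + 16 / (7 * (\<alpha> - 1))) * (2 + \<eta>)"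
    using assms by (simp add: field_simps)
  finally show ?thesis .
qed

section \<open>Gaussian tail bounds\<close>

definition normal_quad_mgf :: "real \<Rightarrow> real \<Rightarrow> real \<Rightarrow> real" where
  "normal_quad_mgf \<sigma> u v = exp (u\<^sup>2 * \<sigma>\<^sup>2 / (2 * (1 - 2 * v * \<sigma>\<^sup>2))) / sqrt (1 - 2 * v * \<sigma>\<^sup>2)"

lemma normal_quad_mgf_nonneg: "2 * v * \<sigma>\<^sup>2 < 1 \<Longrightarrow> 0 \<le> normal_quad_mgf \<sigma> u v"
  unfolding normal_quad_mgf_def by simp

lemma nn_integral_exp_quadratic_normal:
  fixes \<sigma> u v :: real
  assumes \<sigma>: "\<sigma> > 0" and v: "2 * v * \<sigma>\<^sup>2 < 1"
  shows "(\<integral>\<^sup>+x. ennreal (exp (u * x + v * x\<^sup>2)) \<partial>density lborel (normal_density 0 \<sigma>))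
           = ennreal (normal_quad_mgf \<sigma> u v)"
proof -
  define q where "q = 1 - 2 * v * \<sigma>\<^sup>2"
  have q: "q > 0" using v by (simp add: q_def)
  define s where "s = \<sigma> / sqrt q"
  have s: "s > 0" using \<sigma> q by (simp add: s_def)
  have s2: "s\<^sup>2 = \<sigma>\<^sup>2 / q" using q by (simp add: s_def power_divide)
  define m where "m = u * s\<^sup>2"
  define K where "K = normal_quad_mgf \<sigma> u v"
  have K: "K \<ge> 0" unfolding K_def by (rule normal_quad_mgf_nonneg[OF v])
  \<comment> \<open>Completing the square: the integrand is K times the density of N(m, s^2).\<close>
  have square: "normal_density 0 \<sigma> x * exp (u * x + v * x\<^sup>2) = K * normal_density m s x" for x
  proof -
    have v_eq: "v = (1 - q) / (2 * \<sigma>\<^sup>2)" using \<sigma> unfolding q_def by (simp add: field_simps)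
    have m_eq: "m = u * \<sigma>\<^sup>2 / q" unfolding m_def s2 by simp
    have exponent: "-(x - 0)\<^sup>2 / (2 * \<sigma>\<^sup>2) + (u * x + v * x\<^sup>2)
        = u\<^sup>2 * \<sigma>\<^sup>2 / (2 * q) + (-(x - m)\<^sup>2 / (2 * s\<^sup>2))"
      unfolding v_eq m_eq s2 using \<sigma> q by (simp add: field_simps power2_eq_square)
    have factor: "1 / sqrt (2 * pi * \<sigma>\<^sup>2) = (1 / sqrt q) * (1 / sqrt (2 * pi * s\<^sup>2))"
      using \<sigma> q by (simp add: s2 real_sqrt_divide real_sqrt_mult)
    have "normal_density 0 \<sigma> x * exp (u * x + v * x\<^sup>2)
        = 1 / sqrt (2 * pi * \<sigma>\<^sup>2) * exp (-(x - 0)\<^sup>2 / (2 * \<sigma>\<^sup>2) + (u * x + v * x\<^sup>2))"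
      unfolding normal_density_def by (simp only: exp_add mult.assoc)
    also have "\<dots> = exp (u\<^sup>2 * \<sigma>\<^sup>2 / (2 * q)) / sqrt q
        * (1 / sqrt (2 * pi * s\<^sup>2) * exp (-(x - m)\<^sup>2 / (2 * s\<^sup>2)))"
      unfolding exponent factor exp_add by simp
    also have "\<dots> = K * normal_density m s x"
      unfolding K_def normal_quad_mgf_def q_def[symmetric] normal_density_def ..
    finally show ?thesis .
  qed
  have "(\<integral>\<^sup>+x. ennreal (exp (u * x + v * x\<^sup>2)) \<partial>density lborel (normal_density 0 \<sigma>))
      = (\<integral>\<^sup>+x. ennreal K * ennreal (normal_density m s x) \<partial>lborel)"
    by (subst nn_integral_density) (auto intro!: nn_integral_cong simp: K square simp flip: ennreal_mult)
  also have "\<dots> = ennreal K"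
    using s by (subst nn_integral_cmult) (auto simp: nn_integral_eq_integral)
  finally show ?thesis unfolding K_def .
qed

lemma prob_space_noise_measure: "\<sigma> > 0 \<Longrightarrow> prob_space (noise_measure n \<sigma>)"
  unfolding noise_measure_def by (intro prob_space_PiM prob_space_normal_density) auto

lemma nn_integral_noise_exp_quadratic:
  fixes u v :: "nat \<Rightarrow> real"
  assumes \<sigma>: "\<sigma> > 0" and v: "\<And>i. i < n \<Longrightarrow> 2 * v i * \<sigma>\<^sup>2 < 1"
  shows "(\<integral>\<^sup>+e. ennreal (exp (\<Sum>i<n. u i * e i + v i * (e i)\<^sup>2)) \<partial>noise_measure n \<sigma>)
           = ennreal (\<Prod>i<n. normal_quad_mgf \<sigma> (u i) (v i))"
proof -
  interpret product_prob_space "\<lambda>_. density lborel (normal_density 0 \<sigma>)" "{..<n}"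
    by (intro product_prob_spaceI prob_space_normal_density) (use \<sigma> in auto)
  have "(\<integral>\<^sup>+e. ennreal (exp (\<Sum>i<n. u i * e i + v i * (e i)\<^sup>2)) \<partial>noise_measure n \<sigma>)
      = (\<integral>\<^sup>+e. (\<Prod>i<n. ennreal (exp (u i * e i + v i * (e i)\<^sup>2))) \<partial>noise_measure n \<sigma>)"
    by (intro nn_integral_cong) (simp add: exp_sum prod_ennreal)
  also have "\<dots> = (\<Prod>i<n. \<integral>\<^sup>+x. ennreal (exp (u i * x + v i * x\<^sup>2))
                       \<partial>density lborel (normal_density 0 \<sigma>))"
    unfolding noise_measure_def
    by (rule product_nn_integral_prod[where f = "\<lambda>i x. ennreal (exp (u i * x + v i * x\<^sup>2))"]) auto
  also have "\<dots> = (\<Prod>i<n. ennreal (normal_quad_mgf \<sigma> (u i) (v i)))"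
    by (simp add: nn_integral_exp_quadratic_normal \<sigma> v)
  also have "\<dots> = ennreal (\<Prod>i<n. normal_quad_mgf \<sigma> (u i) (v i))"
    by (rule prod_ennreal) (simp add: normal_quad_mgf_nonneg v)
  finally show ?thesis .
qed

lemma noise_quadratic_chernoff:
  fixes u v :: "nat \<Rightarrow> real" and c t :: real
  assumes \<sigma>: "\<sigma> > 0" and t: "t > 0" and v: "\<And>i. i < n \<Longrightarrow> 2 * (t * v i) * \<sigma>\<^sup>2 < 1"
  shows "measure (noise_measure n \<sigma>)
           {e \<in> space (noise_measure n \<sigma>). c \<le> (\<Sum>i<n. u i * e i + v i * (e i)\<^sup>2)}
         \<le> exp (- t * c) * (\<Prod>i<n. normal_quad_mgf \<sigma> (t * u i) (t * v i))"
proof -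
  let ?M = "noise_measure n \<sigma>"
  let ?f = "\<lambda>e. \<Sum>i<n. u i * e i + v i * (e i)\<^sup>2"
  let ?mgf = "\<Prod>i<n. normal_quad_mgf \<sigma> (t * u i) (t * v i)"
  interpret prob_space ?M by (rule prob_space_noise_measure[OF \<sigma>])
  have mgf_nonneg: "0 \<le> ?mgf" by (intro prod_nonneg normal_quad_mgf_nonneg v) simp
  have "emeasure ?M {e \<in> space ?M. c \<le> ?f e}
      \<le> ennreal (exp (- t * c)) * (\<integral>\<^sup>+e. ennreal (exp (t * ?f e)) * indicator (space ?M) e \<partial>?M)"
    by (rule Chernoff_ineq_nn_integral_ge) (use t in \<open>auto simp: noise_measure_def\<close>)
  also have "(\<integral>\<^sup>+e. ennreal (exp (t * ?f e)) * indicator (space ?M) e \<partial>?M)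
      = (\<integral>\<^sup>+e. ennreal (exp (\<Sum>i<n. (t * u i) * e i + (t * v i) * (e i)\<^sup>2)) \<partial>?M)"
    by (intro nn_integral_cong) (simp add: sum_distrib_left algebra_simps)
  also have "\<dots> = ennreal ?mgf"
    by (rule nn_integral_noise_exp_quadratic[OF \<sigma> v])
  finally show ?thesis
    using mgf_nonneg by (simp add: emeasure_eq_measure ennreal_mult''[symmetric])
qed

lemma noise_linear_tail:
  fixes w :: "nat \<Rightarrow> real"
  assumes \<sigma>: "\<sigma> > 0" and w: "(\<Sum>i<n. (w i)\<^sup>2) = W" "W > 0" and x: "x > 0"
  shows "measure (noise_measure n \<sigma>) {e \<in> space (noise_measure n \<sigma>). x \<le> (\<Sum>i<n. w i * e i)}
         \<le> exp (- x\<^sup>2 / (2 * W * \<sigma>\<^sup>2))"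
proof -
  define t where "t = x / (W * \<sigma>\<^sup>2)"
  have t: "t > 0" using x \<sigma> w by (simp add: t_def)
  have "measure (noise_measure n \<sigma>)
          {e \<in> space (noise_measure n \<sigma>). x \<le> (\<Sum>i<n. w i * e i + 0 * (e i)\<^sup>2)}
        \<le> exp (- t * x) * (\<Prod>i<n. normal_quad_mgf \<sigma> (t * w i) (t * 0))"
    by (rule noise_quadratic_chernoff) (use \<sigma> t in auto)
  also have "(\<Prod>i<n. normal_quad_mgf \<sigma> (t * w i) (t * 0)) = exp (\<Sum>i<n. t\<^sup>2 * \<sigma>\<^sup>2 / 2 * (w i)\<^sup>2)"
    by (simp add: exp_sum normal_quad_mgf_def power_mult_distrib mult_ac)
  also have "\<dots> = exp (t\<^sup>2 * \<sigma>\<^sup>2 / 2 * W)"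
    by (simp only: sum_distrib_left[symmetric] w)
  also have "exp (- t * x) * exp (t\<^sup>2 * \<sigma>\<^sup>2 / 2 * W) = exp (- x\<^sup>2 / (2 * W * \<sigma>\<^sup>2))"
    unfolding exp_add[symmetric] using \<sigma> w by (simp add: t_def field_simps power2_eq_square)
  finally show ?thesis by simp
qed

lemma noise_sq_norm_lower_tail:
  assumes \<sigma>: "\<sigma> > 0"
  shows "measure (noise_measure n \<sigma>)
           {e \<in> space (noise_measure n \<sigma>). (\<Sum>i<n. (e i)\<^sup>2) \<le> a * real n * \<sigma>\<^sup>2}
         \<le> exp (real n * (a / 2)) * (1 / sqrt 2) ^ n"
proof -
  define t where "t = 1 / (2 * \<sigma>\<^sup>2)"
  have t: "t > 0" using \<sigma> by (simp add: t_def)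
  have "{e \<in> space (noise_measure n \<sigma>). (\<Sum>i<n. (e i)\<^sup>2) \<le> a * real n * \<sigma>\<^sup>2}
      = {e \<in> space (noise_measure n \<sigma>). - a * real n * \<sigma>\<^sup>2 \<le> (\<Sum>i<n. 0 * e i + (-1) * (e i)\<^sup>2)}"
    by (auto simp: sum_negf)
  also have "measure (noise_measure n \<sigma>) \<dots>
      \<le> exp (- t * (- a * real n * \<sigma>\<^sup>2)) * (\<Prod>i<n. normal_quad_mgf \<sigma> (t * 0) (t * (-1)))"
    by (rule noise_quadratic_chernoff) (use \<sigma> t in \<open>auto simp: t_def\<close>)
  also have "\<dots> = exp (real n * (a / 2)) * (1 / sqrt 2) ^ n"
    using \<sigma> by (simp add: normal_quad_mgf_def t_def)
  finally show ?thesis .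
qed

lemma noise_sq_norm_upper_tail:
  assumes \<sigma>: "\<sigma> > 0"
  shows "measure (noise_measure n \<sigma>)
           {e \<in> space (noise_measure n \<sigma>). b * real n * \<sigma>\<^sup>2 \<le> (\<Sum>i<n. (e i)\<^sup>2)}
         \<le> exp (real n * (- b / 4)) * sqrt 2 ^ n"
proof -
  define t where "t = 1 / (4 * \<sigma>\<^sup>2)"
  have t: "t > 0" using \<sigma> by (simp add: t_def)
  have "measure (noise_measure n \<sigma>)
          {e \<in> space (noise_measure n \<sigma>). b * real n * \<sigma>\<^sup>2 \<le> (\<Sum>i<n. 0 * e i + 1 * (e i)\<^sup>2)}
      \<le> exp (- t * (b * real n * \<sigma>\<^sup>2)) * (\<Prod>i<n. normal_quad_mgf \<sigma> (t * 0) (t * 1))"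
    by (rule noise_quadratic_chernoff) (use \<sigma> t in \<open>auto simp: t_def\<close>)
  also have "\<dots> = exp (real n * (- b / 4)) * sqrt 2 ^ n"
    using \<sigma> by (simp add: normal_quad_mgf_def t_def real_sqrt_divide)
  finally show ?thesis by simp
qed

lemma exp_mult_power_le:
  assumes "0 \<le> b" and "b \<le> exp (c - a)"
  shows "exp (real n * a) * b ^ n \<le> exp (real n * c)"
proof -
  have "exp a * b \<le> exp a * exp (c - a)" using assms by simp
  then have "exp a * b \<le> exp c" by (simp flip: exp_add)
  then have "(exp a * b) ^ n \<le> exp c ^ n" using assms by (simp add: power_mono)
  then show ?thesis by (simp add: exp_of_nat_mult power_mult_distrib)
qed

lemma inverse_sqrt_two_le_exp: "- 1 / 3 \<le> y \<Longrightarrow> 1 / sqrt 2 \<le> exp y"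
proof -
  assume "- 1 / 3 \<le> y"
  then have "- 2 * y \<le> ln 2" using ln2_ge_two_thirds by linarith
  then have "exp (- y) ^ 2 \<le> 2" by (simp add: exp_of_nat_mult[symmetric] ln_ge_iff)
  then have "exp (- y) \<le> sqrt 2" by (simp add: real_le_rsqrt)
  then show ?thesis by (simp add: exp_minus field_simps)
qed

lemma two_mult_powr_neg_le:
  fixes a :: real assumes p: "p \<ge> 2" and a: "a \<ge> 1"
  shows "2 * real p * real p powr (- (2 * a)) \<le> real p powr (1 - a)"
proof -
  define q where "q = real p powr a"
  have "real p powr 1 \<le> q" unfolding q_def by (rule powr_mono) (use a p in auto)
  then have q: "q \<ge> 2" using p by simp
  have "2 * real p * real p powr (- (2 * a)) = real p * (2 / (q * q))"
    unfolding q_def by (simp add: powr_minus powr_add[symmetric] field_simps)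
  also have "\<dots> \<le> real p * (1 / q)" using q by (intro mult_left_mono) (auto simp: field_simps)
  also have "\<dots> = real p powr (1 - a)" unfolding q_def using p by (simp add: powr_diff)
  finally show ?thesis .
qed

text \<open>The constants 49/100 and 5 are chosen so that both chi-square tails are at most
  \<open>exp (- n / 24)\<close>.\<close>

definition good_noise :: "nat \<Rightarrow> nat \<Rightarrow> (nat \<Rightarrow> nat \<Rightarrow> real) \<Rightarrow> real \<Rightarrow> real \<Rightarrow> (nat \<Rightarrow> real) \<Rightarrow> bool" where
  "good_noise n p X \<sigma> x e \<longleftrightarrow>
     (\<forall>j<p. \<bar>\<Sum>i<n. X i j * e i\<bar> \<le> x)
     \<and> 49 / 100 * real n * \<sigma>\<^sup>2 \<le> (\<Sum>i<n. (e i)\<^sup>2) \<and> (\<Sum>i<n. (e i)\<^sup>2) \<le> 5 * real n * \<sigma>\<^sup>2"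

lemma sets_good_noise:
  "{e \<in> space (noise_measure n \<sigma>). good_noise n p X \<sigma> x e} \<in> sets (noise_measure n \<sigma>)"
  unfolding good_noise_def noise_measure_def by measurable

lemma noise_sq_norm_small:
  assumes \<sigma>: "\<sigma> > 0"
  shows "measure (noise_measure n \<sigma>)
           {e \<in> space (noise_measure n \<sigma>). (\<Sum>i<n. (e i)\<^sup>2) \<le> 49 / 100 * real n * \<sigma>\<^sup>2}
         \<le> exp (- real n / 24)"
proof -
  have "measure (noise_measure n \<sigma>)
          {e \<in> space (noise_measure n \<sigma>). (\<Sum>i<n. (e i)\<^sup>2) \<le> 49 / 100 * real n * \<sigma>\<^sup>2}
        \<le> exp (real n * (- 1 / 24))"
    by (rule order_trans[OF noise_sq_norm_lower_tail[OF \<sigma>] exp_mult_power_le])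
      (auto intro: inverse_sqrt_two_le_exp)
  then show ?thesis by simp
qed

lemma noise_sq_norm_large:
  assumes \<sigma>: "\<sigma> > 0"
  shows "measure (noise_measure n \<sigma>)
           {e \<in> space (noise_measure n \<sigma>). 5 * real n * \<sigma>\<^sup>2 \<le> (\<Sum>i<n. (e i)\<^sup>2)}
         \<le> exp (- real n / 24)"
proof -
  have "sqrt 2 \<le> (2 :: real)" by (rule real_le_lsqrt) auto
  also have "\<dots> \<le> exp (- 1 / 24 - (- 5 / 4))"
    by (rule order_trans[OF _ exp_ge_add_one_self]) simp
  finally have "sqrt 2 \<le> exp (- 1 / 24 - (- 5 / 4 :: real))" .
  then have "measure (noise_measure n \<sigma>)
          {e \<in> space (noise_measure n \<sigma>). 5 * real n * \<sigma>\<^sup>2 \<le> (\<Sum>i<n. (e i)\<^sup>2)}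
        \<le> exp (real n * (- 1 / 24))"
    by (intro order_trans[OF noise_sq_norm_upper_tail[OF \<sigma>] exp_mult_power_le]) simp_all
  then show ?thesis by simp
qed

lemma noise_column_tails:
  assumes \<sigma>: "\<sigma> > 0" and n: "n > 0" and x: "x > 0"
    and columns: "\<And>j. j < p \<Longrightarrow> (\<Sum>i<n. (X i j)\<^sup>2) = real n"
  shows "measure (noise_measure n \<sigma>) (\<Union>j<p. {e \<in> space (noise_measure n \<sigma>). x \<le> \<bar>\<Sum>i<n. X i j * e i\<bar>})
         \<le> 2 * real p * exp (- x\<^sup>2 / (2 * real n * \<sigma>\<^sup>2))"
proof -
  let ?M = "noise_measure n \<sigma>"
  let ?tail = "exp (- x\<^sup>2 / (2 * real n * \<sigma>\<^sup>2))"
  interpret prob_space ?M by (rule prob_space_noise_measure[OF \<sigma>])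
  define U where "U j = {e \<in> space ?M. x \<le> (\<Sum>i<n. X i j * e i)}" for j
  define V where "V j = {e \<in> space ?M. x \<le> (\<Sum>i<n. (- X i j) * e i)}" for j
  have sets: "U j \<in> sets ?M" "V j \<in> sets ?M" for j
    unfolding U_def V_def noise_measure_def by measurable
  have "(\<Union>j<p. {e \<in> space ?M. x \<le> \<bar>\<Sum>i<n. X i j * e i\<bar>}) = (\<Union>j<p. U j \<union> V j)"
    by (auto simp: U_def V_def abs_if sum_negf)
  moreover have "measure ?M (\<Union>j<p. U j \<union> V j) \<le> (\<Sum>j<p. measure ?M (U j \<union> V j))"
    by (rule finite_measure_subadditive_finite) (auto simp: sets)
  ultimately have "measure ?M (\<Union>j<p. {e \<in> space ?M. x \<le> \<bar>\<Sum>i<n. X i j * e i\<bar>})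
      \<le> (\<Sum>j<p. measure ?M (U j \<union> V j))"
    by simp
  also have "\<dots> \<le> (\<Sum>j<p. measure ?M (U j) + measure ?M (V j))"
    by (intro sum_mono measure_Un_le sets)
  also have "\<dots> \<le> (\<Sum>j<p. 2 * ?tail)"
  proof (intro sum_mono)
    fix j assume "j \<in> {..<p}"
    then have col: "(\<Sum>i<n. (X i j)\<^sup>2) = real n" "(\<Sum>i<n. (- X i j)\<^sup>2) = real n"
      by (simp_all add: columns)
    have "measure ?M (U j) \<le> ?tail" "measure ?M (V j) \<le> ?tail"
      unfolding U_def V_def using n
      by (intro noise_linear_tail[OF \<sigma> col(1) _ x] noise_linear_tail[OF \<sigma> col(2) _ x]; simp)+
    then show "measure ?M (U j) + measure ?M (V j) \<le> 2 * ?tail" by simp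
  qed
  finally show ?thesis by simp
qed

lemma measure_good_noise:
  assumes \<sigma>: "\<sigma> > 0" and n: "n > 0" and x: "x > 0"
    and columns: "\<And>j. j < p \<Longrightarrow> (\<Sum>i<n. (X i j)\<^sup>2) = real n"
  shows "1 - 2 * real p * exp (- x\<^sup>2 / (2 * real n * \<sigma>\<^sup>2)) - 2 * exp (- real n / 24)
         \<le> measure (noise_measure n \<sigma>) {e \<in> space (noise_measure n \<sigma>). good_noise n p X \<sigma> x e}"
proof -
  let ?M = "noise_measure n \<sigma>"
  interpret prob_space ?M by (rule prob_space_noise_measure[OF \<sigma>])
  define E where "E = {e \<in> space ?M. good_noise n p X \<sigma> x e}"
  define C where "C = (\<Union>j<p. {e \<in> space ?M. x \<le> \<bar>\<Sum>i<n. X i j * e i\<bar>})"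
  define Lo where "Lo = {e \<in> space ?M. (\<Sum>i<n. (e i)\<^sup>2) \<le> 49 / 100 * real n * \<sigma>\<^sup>2}"
  define Up where "Up = {e \<in> space ?M. 5 * real n * \<sigma>\<^sup>2 \<le> (\<Sum>i<n. (e i)\<^sup>2)}"
  have sets: "E \<in> sets ?M" "C \<in> sets ?M" "Lo \<in> sets ?M" "Up \<in> sets ?M"
    unfolding E_def using sets_good_noise
    unfolding C_def Lo_def Up_def noise_measure_def by measurable
  have "space ?M - E \<subseteq> C \<union> Lo \<union> Up"
    by (auto simp: E_def C_def Lo_def Up_def good_noise_def not_le)
  then have "measure ?M (space ?M - E) \<le> measure ?M (C \<union> Lo \<union> Up)"
    by (rule finite_measure_mono) (intro sets.Un sets)
  also have "\<dots> \<le> measure ?M C + measure ?M Lo + measure ?M Up"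
    using measure_Un_le[OF sets.Un[OF sets(2,3)] sets(4)] measure_Un_le[OF sets(2,3)] by linarith
  also have "\<dots> \<le> 2 * real p * exp (- x\<^sup>2 / (2 * real n * \<sigma>\<^sup>2)) + 2 * exp (- real n / 24)"
    using noise_column_tails[where p = p and X = X, OF \<sigma> n x columns]
      noise_sq_norm_small[OF \<sigma>, where n = n] noise_sq_norm_large[OF \<sigma>, where n = n]
    unfolding C_def Lo_def Up_def by linarith
  finally show ?thesis
    using prob_compl[OF sets(1)] unfolding E_def by simp
qed

lemma measure_good_noise_sqrt_lasso:
  assumes \<sigma>: "\<sigma> > 0" and n: "n > 0" and p: "p \<ge> 2" and A: "A > 0" "8 \<le> A\<^sup>2"
    and diag: "\<forall>j<p. gram n X j j = 1"
  defines "lam \<equiv> A * sqrt (2 * ln (real p) / real n)"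
  shows "1 - real p powr (1 - A\<^sup>2 / 8) - 2 * exp (- real n / 24)
         \<le> measure (noise_measure n \<sigma>)
             {e \<in> space (noise_measure n \<sigma>). good_noise n p X \<sigma> (lam * real n * \<sigma> / 2) e}"
proof -
  have ln_p: "ln (real p) > 0" using p by simp
  have x: "lam * real n * \<sigma> / 2 > 0" using A ln_p n \<sigma> by (simp add: lam_def)
  have "(lam * real n * \<sigma> / 2)\<^sup>2 / (2 * real n * \<sigma>\<^sup>2) = 2 * (A\<^sup>2 / 8) * ln (real p)"
    using n \<sigma> ln_p by (simp add: lam_def power_mult_distrib power2_eq_square field_simps)
  then have "2 * real p * exp (- (lam * real n * \<sigma> / 2)\<^sup>2 / (2 * real n * \<sigma>\<^sup>2))
      = 2 * real p * real p powr (- (2 * (A\<^sup>2 / 8)))"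
    using p by (simp add: powr_def)
  also have "\<dots> \<le> real p powr (1 - A\<^sup>2 / 8)" by (rule two_mult_powr_neg_le) (use p A in auto)
  finally show ?thesis
    using measure_good_noise[OF \<sigma> n x, of p X] diag sum_sq_column_of_gram_diag by fastforce
qed

section \<open>Error bound and support recovery\<close>

lemma sqrt_lasso_linf_error:
  assumes min: "is_sqrt_lasso_min n p X (response n p X \<beta>s eps) lam \<beta>h"
    and \<sigma>: "\<sigma> > 0" and lam: "lam > 0" and \<eta>: "\<eta> \<ge> 0"
    and diag: "\<forall>j<p. gram n X j j = 1"
    and offdiag: "\<forall>j<p. \<forall>k<p. k \<noteq> j \<longrightarrow> \<bar>gram n X j k\<bar> \<le> 1 / (7 * \<alpha> * real s)"
    and s: "s \<ge> 1" and supp: "card (support p \<beta>s) \<le> s" and \<alpha>: "\<alpha> > 1"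
    and signal: "lam * l1norm p \<beta>s \<le> \<eta> * \<sigma>"
    and good: "good_noise n p X \<sigma> (lam * real n * \<sigma> / 2) eps"
    and j: "j < p"
  shows "\<bar>\<beta>h j - \<beta>s j\<bar> \<le> 2 * (1 + 16 / (7 * (\<alpha> - 1))) * (2 + \<eta>) * lam * \<sigma>"
proof -
  define D where "D k = \<beta>h k - \<beta>s k" for k
  define M where "M = (7 / 2 + \<eta>) * lam * \<sigma>"
  have n: "n > 0" using diag j by (cases n) (auto simp: gram_def)
  have score: "\<And>k. k < p \<Longrightarrow> \<bar>\<Sum>i<n. X i k * eps i\<bar> \<le> lam * real n * \<sigma> / 2"
    and lower: "49 / 100 * real n * \<sigma>\<^sup>2 \<le> (\<Sum>i<n. (eps i)\<^sup>2)"
    and upper: "(\<Sum>i<n. (eps i)\<^sup>2) \<le> 9 * real n * \<sigma>\<^sup>2"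
    using good unfolding good_noise_def by auto
  have "(1 - 5 / 7) * l1norm p D \<le> 2 * (\<Sum>k\<in>support p \<beta>s. \<bar>D k\<bar>)"
    unfolding D_def by (rule l1norm_cone_of_excess[OF sqrt_lasso_l1_excess[OF min n \<sigma> lam score lower]])
  then have cone: "l1norm p D \<le> 7 * (\<Sum>k\<in>support p \<beta>s. \<bar>D k\<bar>)" by simp
  have rows: "\<bar>D k\<bar> \<le> M + l1norm p D / (7 * \<alpha> * real s)" if k: "k < p" for k
  proof -
    have "\<bar>D k\<bar> \<le> \<bar>\<Sum>k'<p. gram n X k k' * D k'\<bar> + 1 / (7 * \<alpha> * real s) * l1norm p D"
      by (rule abs_le_row_sum_incoherent) (use k diag offdiag \<alpha> in auto)
    moreover have "\<bar>\<Sum>k'<p. gram n X k k' * D k'\<bar> \<le> M"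
      unfolding D_def M_def
      by (rule sqrt_lasso_gram_error_bound[OF min \<sigma> lam k]) (use k diag score upper signal in auto)
    ultimately show ?thesis by simp
  qed
  have "\<bar>D j\<bar> \<le> \<alpha> / (\<alpha> - 1) * M"
    by (rule abs_le_of_cone_incoherent[OF _ supp s _ \<alpha> _ cone rows j])
      (use lam \<sigma> \<eta> in \<open>auto simp: support_def M_def\<close>)
  also have "\<dots> = (\<alpha> / (\<alpha> - 1) * (7 / 2 + \<eta>)) * (lam * \<sigma>)" by (simp add: M_def mult_ac)
  also have "\<dots> \<le> (2 * (1 + 16 / (7 * (\<alpha> - 1))) * (2 + \<eta>)) * (lam * \<sigma>)"
    by (rule mult_right_mono[OF sqrt_lasso_constant_le[OF \<alpha> \<eta>]]) (use lam \<sigma> in simp)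
  finally show ?thesis unfolding D_def by (simp only: mult.assoc)
qed

lemma recovery_of_entrywise_bound:
  assumes t: "0 \<le> t" and close: "\<And>j. j < p \<Longrightarrow> \<bar>b j - \<beta>s j\<bar> \<le> t"
  shows "linfnorm p (\<lambda>j. b j - \<beta>s j) \<le> t
         \<and> ((\<forall>j\<in>support p \<beta>s. 2 * t < \<bar>\<beta>s j\<bar>) \<longrightarrow> {j. j < p \<and> t < \<bar>b j\<bar>} = support p \<beta>s)"
proof (intro conjI impI)
  show "linfnorm p (\<lambda>j. b j - \<beta>s j) \<le> t" using t close by (simp add: linfnorm_def)
next
  assume large: "\<forall>j\<in>support p \<beta>s. 2 * t < \<bar>\<beta>s j\<bar>"
  show "{j. j < p \<and> t < \<bar>b j\<bar>} = support p \<beta>s"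
  proof (intro set_eqI iffI)
    fix j assume "j \<in> {j. j < p \<and> t < \<bar>b j\<bar>}"
    then show "j \<in> support p \<beta>s" using close[of j] by (auto simp: support_def)
  next
    fix j assume "j \<in> support p \<beta>s"
    then show "j \<in> {j. j < p \<and> t < \<bar>b j\<bar>}" using close[of j] large by (force simp: support_def)
  qed
qed

lemma positive_prob_bound_cases:
  fixes A :: real
  assumes "0 < 1 - real p powr (1 - A\<^sup>2 / 8) - (1 + exp 2) * exp (- real n / 24)"
  shows "n > 0 \<and> (p = 0 \<or> 2 \<le> p \<and> 8 \<le> A\<^sup>2)"
proof -
  have powr: "0 \<le> real p powr (1 - A\<^sup>2 / 8)" by simp
  have tail: "0 < (1 + exp 2) * exp (- real n / 24)" by (intro mult_pos_pos add_pos_pos) auto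
  have "n \<noteq> 0"
  proof
    assume "n = 0"
    then have "(1 + exp 2) * exp (- real n / 24) = 1 + exp 2" by simp
    then show False using assms powr exp_gt_zero[of 2] by linarith
  qed
  moreover have "p \<noteq> 1"
  proof
    assume "p = 1"
    then have "real p powr (1 - A\<^sup>2 / 8) = 1" by simp
    then show False using assms tail by linarith
  qed
  moreover have "8 \<le> A\<^sup>2" if "2 \<le> p"
  proof (rule ccontr)
    assume "\<not> 8 \<le> A\<^sup>2"
    then have "1 \<le> real p powr (1 - A\<^sup>2 / 8)" using that by (intro ge_one_powr_ge_zero) auto
    then show False using assms tail by linarith
  qed
  ultimately show ?thesis by linarith
qed

theorem proposition4:
  fixes n p s :: nat and X :: "nat \<Rightarrow> nat \<Rightarrow> real" and \<beta>s :: "nat \<Rightarrow> real"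
    and \<sigma> \<alpha> A \<eta> :: real
  assumes sigma_pos: "\<sigma> > 0"
    and diag: "\<forall>j<p. gram n X j j = 1"
    and offdiag: "\<forall>j<p. \<forall>k<p. k \<noteq> j \<longrightarrow> \<bar>gram n X j k\<bar> \<le> 1 / (7 * \<alpha> * real s)"
    and s_ge: "s \<ge> 1" and supp: "card (support p \<beta>s) \<le> s" and alpha_gt: "\<alpha> > 1"
    and A_pos: "A > 0"
    and eta_pos: "\<eta> > 0"
    and eta_bound: "A * sqrt (2 * ln (real p) / real n) * l1norm p \<beta>s \<le> \<eta> * \<sigma>"
  shows "\<exists>E \<in> sets (noise_measure n \<sigma>).
           measure (noise_measure n \<sigma>) E
             \<ge> 1 - real p powr (1 - A\<^sup>2 / 8) - (1 + exp 2) * exp (- real n / 24)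
         \<and> (\<forall>eps \<in> E. \<forall>\<beta>h.
              is_sqrt_lasso_min n p X (response n p X \<beta>s eps) (A * sqrt (2 * ln (real p) / real n)) \<beta>h \<longrightarrow>
                (let lam = A * sqrt (2 * ln (real p) / real n);
                     C = 2 * (1 + 16 / (7 * (\<alpha> - 1)));
                     t = C * (2 + \<eta>) * lam * \<sigma>
                 in linfnorm p (\<lambda>j. \<beta>h j - \<beta>s j) \<le> t
                    \<and> ((\<forall>j \<in> support p \<beta>s. \<bar>\<beta>s j\<bar> > 2 * t) \<longrightarrow>
                         {j. j < p \<and> \<bar>\<beta>h j\<bar> > t} = support p \<beta>s)))"
proof -
  let ?M = "noise_measure n \<sigma>"
  let ?B = "1 - real p powr (1 - A\<^sup>2 / 8) - (1 + exp 2) * exp (- real n / 24)"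
  interpret prob_space ?M by (rule prob_space_noise_measure[OF sigma_pos])
  consider (vacuous) "?B \<le> 0" | (no_predictors) "p = 0" | (main) "n > 0" "2 \<le> p" "8 \<le> A\<^sup>2"
    using positive_prob_bound_cases[of p A n] by (meson not_le)
  then show ?thesis
  proof cases
    case vacuous
    then show ?thesis by (intro bexI[of _ "{}"]) simp_all
  next
    case no_predictors
    \<comment> \<open>All claims are about indices below \<open>p\<close>; also \<open>ln 0 = 0\<close>, so the threshold is 0.\<close>
    then show ?thesis
      by (intro bexI[of _ "space ?M"]) (simp_all add: prob_space linfnorm_def support_def)
  next
    case main
    define lam where "lam = A * sqrt (2 * ln (real p) / real n)"
    define t where "t = 2 * (1 + 16 / (7 * (\<alpha> - 1))) * (2 + \<eta>) * lam * \<sigma>"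
    define E where "E = {e \<in> space ?M. good_noise n p X \<sigma> (lam * real n * \<sigma> / 2) e}"
    have lam: "lam > 0" using main A_pos by (simp add: lam_def)
    have "2 * exp (- real n / 24) \<le> (1 + exp 2) * exp (- real n / 24)" by simp
    then have prob_E: "?B \<le> measure ?M E"
      using measure_good_noise_sqrt_lasso[OF sigma_pos main(1,2) A_pos main(3) diag]
      unfolding E_def lam_def by linarith
    have recovery: "linfnorm p (\<lambda>j. \<beta>h j - \<beta>s j) \<le> t
        \<and> ((\<forall>j \<in> support p \<beta>s. 2 * t < \<bar>\<beta>s j\<bar>) \<longrightarrow> {j. j < p \<and> t < \<bar>\<beta>h j\<bar>} = support p \<beta>s)"
      if E: "eps \<in> E" and min: "is_sqrt_lasso_min n p X (response n p X \<beta>s eps) lam \<beta>h" for eps \<beta>h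
    proof (rule recovery_of_entrywise_bound)
      show "0 \<le> t" using alpha_gt eta_pos lam sigma_pos by (simp add: t_def)
      show "\<bar>\<beta>h j - \<beta>s j\<bar> \<le> t" if "j < p" for j
        unfolding t_def using E eta_pos eta_bound
        by (intro sqrt_lasso_linf_error[OF min sigma_pos lam _ diag offdiag s_ge supp alpha_gt _ _ that])
          (auto simp: E_def lam_def)
    qed
    show ?thesis
      using prob_E sets_good_noise recovery unfolding E_def lam_def t_def Let_def by blast
  qed
qed

end
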